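(* Let $R$ be a ring with identity, ${}_RM$ a finitely generated semisimple left $R$-module, $\varphi:M\to M$ a nilpotent $R$-endomorphism, and $\{x_{\gamma,i}\mid\gamma\in\Gamma,1\le i\le k_\gamma\}$ a nilpotent Jordan normal base of ${}_RM$ with respect to $\varphi$, with $\Gamma$ finite. Let $\Phi:(R[t])^\Gamma\to M$, $\Phi(\mathbf f)=\sum_{\gamma\in\Gamma}f_\gamma(t)\ast x_{\gamma,1}$, and \[\mathcal M(\Phi)=\{\mathbf P\in M_{\Gamma\times\Gamma}(R[t])\mid \mathbf f\mathbf P\in\ker(\Phi)\text{ for all }\mathbf f\in\ker(\Phi)\}.\] Then $\mathcal M(\Phi)$ is a $Z(R)$-subalgebra of $M_{\Gamma\times\Gamma}(R[t])$. For $\mathbf P\in\mathcal M(\Phi)$, the formula $\psi_{\mathbf P}(\Phi(\mathbf f))=\Phi(\mathbf f\mathbf P)$ ($\mathbf f\in(R[t])^\Gamma$) properly defines an $R$-endomorphism $\psi_{\mathbf P}:M\to M$ with $\psi_{\mathbf P}\circ\varphi=\varphi\circ\psi_{\mathbf P}$, and the assignment $\mathbf P\mapsto\psi_{\mathbf P}$ is a homomorphism of $Z(R)$-algebras $\mathcal M(\Phi)^{\mathrm{op}}\to C_\varphi$.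
   Context: A nilpotent Jordan normal base of ${}_RM$ with respect to $\varphi$ is a subset $\{x_{\gamma,i}\}$ (integers $k_\gamma\ge1$) such that each $Rx_{\gamma,i}$ is simple, $M=\bigoplus_{\gamma,i}Rx_{\gamma,i}$, $\varphi(x_{\gamma,i})=x_{\gamma,i+1}$ for $i<k_\gamma$, $\varphi(x_{\gamma,k_\gamma})=0$. $R[t]$ is the polynomial ring in a commuting indeterminate; $M$ is a left $R[t]$-module via $(a_1+a_2t+\cdots+a_{n+1}t^n)\ast u=a_1u+a_2\varphi(u)+\cdots+a_{n+1}\varphi^n(u)$. Elements of $(R[t])^\Gamma$ are viewed as $1\times\Gamma$ row vectors (after fixing a linear order on $\Gamma$) and $\mathbf f\mathbf P$ is the matrix product. $Z(R)$ is the centre of $R$, and $C_\varphi=\{\psi\in\mathrm{Hom}_R(M,M)\mid\psi\circ\varphi=\varphi\circ\psi\}$. *)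

theory Defs
  imports Main "HOL-Library.Poly_Mapping"
begin

text \<open>R is a type of class ring_1; R[t] (commuting indeterminate t, coefficients
  on the left, convolution product) is represented by a finitely supported map nat to r (poly_mapping),
  i.e. finitely supported coefficient sequences.\<close>

type_synonym 'r rpoly = "nat \<Rightarrow>\<^sub>0 'r"

definition lmodule :: "('r::ring_1 \<Rightarrow> 'm::ab_group_add \<Rightarrow> 'm) \<Rightarrow> bool" where
  "lmodule sm \<longleftrightarrow>
     (\<forall>a b m. sm (a + b) m = sm a m + sm b m) \<and>
     (\<forall>a m n. sm a (m + n) = sm a m + sm a n) \<and>
     (\<forall>a b m. sm (a * b) m = sm a (sm b m)) \<and>
     (\<forall>m. sm 1 m = m)"

definition submodule :: "('r::ring_1 \<Rightarrow> 'm::ab_group_add \<Rightarrow> 'm) \<Rightarrow> 'm set \<Rightarrow> bool" where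
  "submodule sm N \<longleftrightarrow> 0 \<in> N \<and> (\<forall>u\<in>N. \<forall>v\<in>N. u + v \<in> N) \<and> (\<forall>a. \<forall>u\<in>N. sm a u \<in> N)"

definition cyc :: "('r::ring_1 \<Rightarrow> 'm::ab_group_add \<Rightarrow> 'm) \<Rightarrow> 'm \<Rightarrow> 'm set" where
  "cyc sm x = {sm a x | a. True}"

definition simple_submodule :: "('r::ring_1 \<Rightarrow> 'm::ab_group_add \<Rightarrow> 'm) \<Rightarrow> 'm set \<Rightarrow> bool" where
  "simple_submodule sm N \<longleftrightarrow> submodule sm N \<and> N \<noteq> {0} \<and>
     (\<forall>L. submodule sm L \<and> L \<subseteq> N \<longrightarrow> L = {0} \<or> L = N)"

definition rspan :: "('r::ring_1 \<Rightarrow> 'm::ab_group_add \<Rightarrow> 'm) \<Rightarrow> 'm set \<Rightarrow> 'm set" where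
  "rspan sm S = {(\<Sum>s\<in>F. sm (c s) s) | F c. finite F \<and> F \<subseteq> S}"

definition finitely_generated :: "('r::ring_1 \<Rightarrow> 'm::ab_group_add \<Rightarrow> 'm) \<Rightarrow> bool" where
  "finitely_generated sm \<longleftrightarrow> (\<exists>S. finite S \<and> rspan sm S = UNIV)"

definition semisimple :: "('r::ring_1 \<Rightarrow> 'm::ab_group_add \<Rightarrow> 'm) \<Rightarrow> bool" where
  "semisimple sm \<longleftrightarrow> rspan sm (\<Union>{N. simple_submodule sm N}) = UNIV"

definition rhom :: "('r::ring_1 \<Rightarrow> 'm::ab_group_add \<Rightarrow> 'm) \<Rightarrow> ('m \<Rightarrow> 'm) \<Rightarrow> bool" where
  "rhom sm f \<longleftrightarrow> (\<forall>u v. f (u + v) = f u + f v) \<and> (\<forall>a u. f (sm a u) = sm a (f u))"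

definition nilpotent_map :: "('m::ab_group_add \<Rightarrow> 'm) \<Rightarrow> bool" where
  "nilpotent_map \<phi> \<longleftrightarrow> (\<exists>n. \<forall>u. (\<phi> ^^ n) u = 0)"

definition jidx :: "'g set \<Rightarrow> ('g \<Rightarrow> nat) \<Rightarrow> ('g \<times> nat) set" where
  "jidx \<Gamma> k = Sigma \<Gamma> (\<lambda>\<gamma>. {1..k \<gamma>})"

definition jordan_base ::
  "('r::ring_1 \<Rightarrow> 'm::ab_group_add \<Rightarrow> 'm) \<Rightarrow> ('m \<Rightarrow> 'm) \<Rightarrow> 'g set \<Rightarrow> ('g \<Rightarrow> nat) \<Rightarrow> ('g \<Rightarrow> nat \<Rightarrow> 'm) \<Rightarrow> bool" where
  "jordan_base sm \<phi> \<Gamma> k x \<longleftrightarrow>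
     (\<forall>\<gamma>\<in>\<Gamma>. 1 \<le> k \<gamma>) \<and>
     (\<forall>(\<gamma>, i)\<in>jidx \<Gamma> k. simple_submodule sm (cyc sm (x \<gamma> i))) \<and>
     (\<forall>m. \<exists>!c :: 'g \<times> nat \<Rightarrow> 'm.
          (\<forall>(\<gamma>, i)\<in>jidx \<Gamma> k. c (\<gamma>, i) \<in> cyc sm (x \<gamma> i)) \<and>
          (\<forall>p. p \<notin> jidx \<Gamma> k \<longrightarrow> c p = 0) \<and>
          m = (\<Sum>p\<in>jidx \<Gamma> k. c p)) \<and>
     (\<forall>\<gamma>\<in>\<Gamma>. \<forall>i. 1 \<le> i \<and> i < k \<gamma> \<longrightarrow> \<phi> (x \<gamma> i) = x \<gamma> (Suc i)) \<and>
     (\<forall>\<gamma>\<in>\<Gamma>. \<phi> (x \<gamma> (k \<gamma>)) = 0)"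

definition pact :: "('r::ring_1 \<Rightarrow> 'm::ab_group_add \<Rightarrow> 'm) \<Rightarrow> ('m \<Rightarrow> 'm) \<Rightarrow> 'r rpoly \<Rightarrow> 'm \<Rightarrow> 'm" where
  "pact sm \<phi> p u = (\<Sum>n\<in>Poly_Mapping.keys p. sm (Poly_Mapping.lookup p n) ((\<phi> ^^ n) u))"

definition rvecs :: "'g set \<Rightarrow> ('g \<Rightarrow> 'r::ring_1 rpoly) set" where
  "rvecs \<Gamma> = {f. \<forall>\<gamma>. \<gamma> \<notin> \<Gamma> \<longrightarrow> f \<gamma> = 0}"

definition rmats :: "'g set \<Rightarrow> ('g \<Rightarrow> 'g \<Rightarrow> 'r::ring_1 rpoly) set" where
  "rmats \<Gamma> = {P. \<forall>\<gamma> \<delta>. \<gamma> \<notin> \<Gamma> \<or> \<delta> \<notin> \<Gamma> \<longrightarrow> P \<gamma> \<delta> = 0}"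

definition vmult :: "'g set \<Rightarrow> ('g \<Rightarrow> 'r::ring_1 rpoly) \<Rightarrow> ('g \<Rightarrow> 'g \<Rightarrow> 'r rpoly) \<Rightarrow> ('g \<Rightarrow> 'r rpoly)" where
  "vmult \<Gamma> f P = (\<lambda>\<delta>. \<Sum>\<gamma>\<in>\<Gamma>. f \<gamma> * P \<gamma> \<delta>)"

definition mmult :: "'g set \<Rightarrow> ('g \<Rightarrow> 'g \<Rightarrow> 'r::ring_1 rpoly) \<Rightarrow> ('g \<Rightarrow> 'g \<Rightarrow> 'r rpoly) \<Rightarrow> ('g \<Rightarrow> 'g \<Rightarrow> 'r rpoly)" where
  "mmult \<Gamma> P Q = (\<lambda>\<gamma> \<delta>. \<Sum>\<epsilon>\<in>\<Gamma>. P \<gamma> \<epsilon> * Q \<epsilon> \<delta>)"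

definition madd :: "('g \<Rightarrow> 'g \<Rightarrow> 'r::ring_1 rpoly) \<Rightarrow> ('g \<Rightarrow> 'g \<Rightarrow> 'r rpoly) \<Rightarrow> ('g \<Rightarrow> 'g \<Rightarrow> 'r rpoly)" where
  "madd P Q = (\<lambda>\<gamma> \<delta>. P \<gamma> \<delta> + Q \<gamma> \<delta>)"

definition mneg :: "('g \<Rightarrow> 'g \<Rightarrow> 'r::ring_1 rpoly) \<Rightarrow> ('g \<Rightarrow> 'g \<Rightarrow> 'r rpoly)" where
  "mneg P = (\<lambda>\<gamma> \<delta>. - P \<gamma> \<delta>)"

definition mone :: "'g set \<Rightarrow> ('g \<Rightarrow> 'g \<Rightarrow> 'r::ring_1 rpoly)" where
  "mone \<Gamma> = (\<lambda>\<gamma> \<delta>. if \<gamma> \<in> \<Gamma> \<and> \<gamma> = \<delta> then 1 else 0)"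

definition mscal :: "'r::ring_1 \<Rightarrow> ('g \<Rightarrow> 'g \<Rightarrow> 'r rpoly) \<Rightarrow> ('g \<Rightarrow> 'g \<Rightarrow> 'r rpoly)" where
  "mscal z P = (\<lambda>\<gamma> \<delta>. Poly_Mapping.single 0 z * P \<gamma> \<delta>)"

definition center :: "'r::ring_1 set" where
  "center = {z. \<forall>a. z * a = a * z}"

definition z_subalgebra :: "'g set \<Rightarrow> ('g \<Rightarrow> 'g \<Rightarrow> 'r::ring_1 rpoly) set \<Rightarrow> bool" where
  "z_subalgebra \<Gamma> A \<longleftrightarrow> A \<subseteq> rmats \<Gamma> \<and> mone \<Gamma> \<in> A \<and>
     (\<forall>P\<in>A. \<forall>Q\<in>A. madd P Q \<in> A \<and> mmult \<Gamma> P Q \<in> A) \<and>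
     (\<forall>P\<in>A. mneg P \<in> A) \<and>
     (\<forall>z\<in>center. \<forall>P\<in>A. mscal z P \<in> A)"

definition PhiMap ::
  "('r::ring_1 \<Rightarrow> 'm::ab_group_add \<Rightarrow> 'm) \<Rightarrow> ('m \<Rightarrow> 'm) \<Rightarrow> 'g set \<Rightarrow> ('g \<Rightarrow> nat \<Rightarrow> 'm) \<Rightarrow> ('g \<Rightarrow> 'r rpoly) \<Rightarrow> 'm" where
  "PhiMap sm \<phi> \<Gamma> x f = (\<Sum>\<gamma>\<in>\<Gamma>. pact sm \<phi> (f \<gamma>) (x \<gamma> 1))"

definition kerPhi ::
  "('r::ring_1 \<Rightarrow> 'm::ab_group_add \<Rightarrow> 'm) \<Rightarrow> ('m \<Rightarrow> 'm) \<Rightarrow> 'g set \<Rightarrow> ('g \<Rightarrow> nat \<Rightarrow> 'm) \<Rightarrow> ('g \<Rightarrow> 'r rpoly) set" where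
  "kerPhi sm \<phi> \<Gamma> x = {f \<in> rvecs \<Gamma>. PhiMap sm \<phi> \<Gamma> x f = 0}"

definition MPhi ::
  "('r::ring_1 \<Rightarrow> 'm::ab_group_add \<Rightarrow> 'm) \<Rightarrow> ('m \<Rightarrow> 'm) \<Rightarrow> 'g set \<Rightarrow> ('g \<Rightarrow> nat \<Rightarrow> 'm) \<Rightarrow> ('g \<Rightarrow> 'g \<Rightarrow> 'r rpoly) set" where
  "MPhi sm \<phi> \<Gamma> x = {P \<in> rmats \<Gamma>. \<forall>f \<in> kerPhi sm \<phi> \<Gamma> x. vmult \<Gamma> f P \<in> kerPhi sm \<phi> \<Gamma> x}"

definition psiP ::
  "('r::ring_1 \<Rightarrow> 'm::ab_group_add \<Rightarrow> 'm) \<Rightarrow> ('m \<Rightarrow> 'm) \<Rightarrow> 'g set \<Rightarrow> ('g \<Rightarrow> nat \<Rightarrow> 'm) \<Rightarrow> ('g \<Rightarrow> 'g \<Rightarrow> 'r rpoly) \<Rightarrow> 'm \<Rightarrow> 'm" where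
  "psiP sm \<phi> \<Gamma> x P = (THE \<psi>. \<forall>f \<in> rvecs \<Gamma>. \<psi> (PhiMap sm \<phi> \<Gamma> x f) = PhiMap sm \<phi> \<Gamma> x (vmult \<Gamma> f P))"

definition centralizer :: "('r::ring_1 \<Rightarrow> 'm::ab_group_add \<Rightarrow> 'm) \<Rightarrow> ('m \<Rightarrow> 'm) \<Rightarrow> ('m \<Rightarrow> 'm) set" where
  "centralizer sm \<phi> = {\<psi>. rhom sm \<psi> \<and> \<psi> \<circ> \<phi> = \<phi> \<circ> \<psi>}"

end

theory Submission
  imports Defs
begin

text \<open>Along each Jordan chain \<open>x \<gamma> i = \<phi>^(i-1) (x \<gamma> 1)\<close>, so \<open>\<Phi>\<close> is a surjective
  homomorphism of left \<open>R[t]\<close>-modules.  Stability of \<open>ker \<Phi>\<close> under right multiplication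
  by \<open>P\<close> makes \<open>\<psi>\<^sub>P\<close> well defined, and \<open>\<psi>\<^sub>P\<close> is \<open>R[t]\<close>-linear because right
  multiplication by \<open>P\<close> is; \<open>R[t]\<close>-linearity amounts to \<open>R\<close>-linearity together with
  commuting with \<open>\<phi> = t\<ast>\<close>.  The algebra identities are checked on elements \<open>\<Phi>(f)\<close>,
  where they reduce to associativity and distributivity of the matrix product.\<close>

lemma poly_mapping_eq_sum_single:
  "(p :: 'a \<Rightarrow>\<^sub>0 'b::comm_monoid_add) =
     (\<Sum>n\<in>Poly_Mapping.keys p. Poly_Mapping.single n (Poly_Mapping.lookup p n))"
proof (rule poly_mapping_eqI)
  fix k
  show "Poly_Mapping.lookup p k =
    Poly_Mapping.lookup (\<Sum>n\<in>Poly_Mapping.keys p. Poly_Mapping.single n (Poly_Mapping.lookup p n)) k"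
    by (cases "k \<in> Poly_Mapping.keys p") (simp_all add: lookup_sum lookup_single when_def in_keys_iff)
qed

lemma single_0_center_commute:
  assumes "z \<in> center"
  shows "Poly_Mapping.single 0 z * p = p * Poly_Mapping.single 0 (z :: 'r::ring_1)"
proof -
  have "Poly_Mapping.single 0 z * p =
      (\<Sum>m\<in>Poly_Mapping.keys p. Poly_Mapping.single m (z * Poly_Mapping.lookup p m))"
    by (subst poly_mapping_eq_sum_single[of p]) (simp add: sum_distrib_left mult_single)
  also have "\<dots> = (\<Sum>m\<in>Poly_Mapping.keys p. Poly_Mapping.single m (Poly_Mapping.lookup p m * z))"
    using assms by (simp add: center_def)
  also have "\<dots> = p * Poly_Mapping.single 0 z"
    by (subst (2) poly_mapping_eq_sum_single[of p]) (simp add: sum_distrib_right mult_single)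
  finally show ?thesis .
qed

lemma vmult_add_left: "vmult \<Gamma> (\<lambda>\<gamma>. f \<gamma> + g \<gamma>) P = (\<lambda>\<delta>. vmult \<Gamma> f P \<delta> + vmult \<Gamma> g P \<delta>)"
  by (simp add: vmult_def distrib_right sum.distrib)

lemma vmult_diff_left: "vmult \<Gamma> (\<lambda>\<gamma>. f \<gamma> - g \<gamma>) P = (\<lambda>\<delta>. vmult \<Gamma> f P \<delta> - vmult \<Gamma> g P \<delta>)"
  by (simp add: vmult_def left_diff_distrib sum_subtractf)

lemma vmult_mult_left: "vmult \<Gamma> (\<lambda>\<gamma>. c * f \<gamma>) P = (\<lambda>\<delta>. c * vmult \<Gamma> f P \<delta>)"
  by (simp add: vmult_def sum_distrib_left mult.assoc)

lemma vmult_madd: "vmult \<Gamma> f (madd P Q) = (\<lambda>\<delta>. vmult \<Gamma> f P \<delta> + vmult \<Gamma> f Q \<delta>)"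
  by (simp add: vmult_def madd_def distrib_left sum.distrib)

lemma vmult_mneg: "vmult \<Gamma> f (mneg P) = (\<lambda>\<delta>. - vmult \<Gamma> f P \<delta>)"
  by (simp add: vmult_def mneg_def sum_negf)

lemma vmult_mone:
  assumes "finite \<Gamma>" and "f \<in> rvecs \<Gamma>"
  shows "vmult \<Gamma> f (mone \<Gamma>) = f"
proof
  fix \<delta>
  have "vmult \<Gamma> f (mone \<Gamma>) \<delta> = (\<Sum>\<gamma>\<in>\<Gamma>. if \<gamma> = \<delta> then f \<gamma> else 0)"
    unfolding vmult_def mone_def by (rule sum.cong) auto
  also have "\<dots> = f \<delta>"
    using assms by (simp add: sum.delta rvecs_def)
  finally show "vmult \<Gamma> f (mone \<Gamma>) \<delta> = f \<delta>" .
qed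

lemma vmult_mscal:
  assumes "z \<in> center"
  shows "vmult \<Gamma> f (mscal z P) = (\<lambda>\<delta>. Poly_Mapping.single 0 z * vmult \<Gamma> f P \<delta>)"
proof
  fix \<delta>
  have "vmult \<Gamma> f (mscal z P) \<delta> = (\<Sum>\<gamma>\<in>\<Gamma>. (f \<gamma> * Poly_Mapping.single 0 z) * P \<gamma> \<delta>)"
    by (simp add: vmult_def mscal_def mult.assoc)
  also have "\<dots> = (\<Sum>\<gamma>\<in>\<Gamma>. Poly_Mapping.single 0 z * (f \<gamma> * P \<gamma> \<delta>))"
    by (simp only: single_0_center_commute[OF assms, symmetric] mult.assoc)
  finally show "vmult \<Gamma> f (mscal z P) \<delta> = Poly_Mapping.single 0 z * vmult \<Gamma> f P \<delta>"
    by (simp add: vmult_def sum_distrib_left)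
qed

lemma vmult_mmult: "vmult \<Gamma> (vmult \<Gamma> f P) Q = vmult \<Gamma> f (mmult \<Gamma> P Q)"
proof
  fix \<delta>
  have "vmult \<Gamma> (vmult \<Gamma> f P) Q \<delta> = (\<Sum>\<epsilon>\<in>\<Gamma>. \<Sum>\<gamma>\<in>\<Gamma>. f \<gamma> * (P \<gamma> \<epsilon> * Q \<epsilon> \<delta>))"
    unfolding vmult_def by (simp add: sum_distrib_right mult.assoc)
  also have "\<dots> = (\<Sum>\<gamma>\<in>\<Gamma>. \<Sum>\<epsilon>\<in>\<Gamma>. f \<gamma> * (P \<gamma> \<epsilon> * Q \<epsilon> \<delta>))"
    by (rule sum.swap)
  finally show "vmult \<Gamma> (vmult \<Gamma> f P) Q \<delta> = vmult \<Gamma> f (mmult \<Gamma> P Q) \<delta>"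
    unfolding vmult_def mmult_def by (simp add: sum_distrib_left)
qed

lemma vmult_in_rvecs: "P \<in> rmats \<Gamma> \<Longrightarrow> vmult \<Gamma> f P \<in> rvecs \<Gamma>"
  by (simp add: vmult_def rmats_def rvecs_def)

lemma mmult_in_rmats:
  assumes "P \<in> rmats \<Gamma>" and "Q \<in> rmats \<Gamma>"
  shows "mmult \<Gamma> P Q \<in> rmats \<Gamma>"
  using assms by (auto simp: rmats_def mmult_def intro!: sum.neutral)

context
  fixes sm :: "'r::ring_1 \<Rightarrow> 'm::ab_group_add \<Rightarrow> 'm" and \<phi> :: "'m \<Rightarrow> 'm"
  assumes lmodule: "lmodule sm" and rhom_\<phi>: "rhom sm \<phi>"
begin

lemma sm_add_left: "sm (a + b) u = sm a u + sm b u"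
  using lmodule by (simp add: lmodule_def)

lemma sm_add_right: "sm a (u + v) = sm a u + sm a v"
  using lmodule by (simp add: lmodule_def)

lemma sm_mult: "sm (a * b) u = sm a (sm b u)"
  using lmodule by (simp add: lmodule_def)

lemma sm_one: "sm 1 u = u"
  using lmodule by (simp add: lmodule_def)

lemma sm_zero_left: "sm 0 u = 0"
  using sm_add_left[of 0 0 u] by simp

lemma sm_zero_right: "sm a 0 = 0"
  using sm_add_right[of a 0 0] by simp

lemma sm_sum_right: "sm a (sum f I) = (\<Sum>i\<in>I. sm a (f i))"
  by (induction I rule: infinite_finite_induct) (auto simp: sm_zero_right sm_add_right)

lemma rhom_zero: "rhom sm f \<Longrightarrow> f 0 = 0"
  unfolding rhom_def by (metis add_cancel_right_right)

lemma rhom_sum: "rhom sm f \<Longrightarrow> f (sum g I) = (\<Sum>i\<in>I. f (g i))"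
  by (induction I rule: infinite_finite_induct) (auto simp: rhom_zero rhom_def)

lemma rhom_funpow: "rhom sm (\<phi> ^^ n)"
  using rhom_\<phi> by (induction n) (auto simp: rhom_def)

lemma pact_eq_sum_superset:
  assumes "finite S" and "Poly_Mapping.keys p \<subseteq> S"
  shows "pact sm \<phi> p u = (\<Sum>n\<in>S. sm (Poly_Mapping.lookup p n) ((\<phi> ^^ n) u))"
  unfolding pact_def using assms
  by (intro sum.mono_neutral_left) (auto simp: in_keys_iff sm_zero_left)

lemma pact_zero: "pact sm \<phi> 0 u = 0"
  by (simp add: pact_def)

lemma pact_add: "pact sm \<phi> (p + q) u = pact sm \<phi> p u + pact sm \<phi> q u"
proof -
  let ?S = "Poly_Mapping.keys p \<union> Poly_Mapping.keys q"
  have "pact sm \<phi> (p + q) u = (\<Sum>n\<in>?S. sm (Poly_Mapping.lookup (p + q) n) ((\<phi> ^^ n) u))"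
    by (rule pact_eq_sum_superset) (simp_all add: keys_add)
  also have "\<dots> = (\<Sum>n\<in>?S. sm (Poly_Mapping.lookup p n) ((\<phi> ^^ n) u))
                + (\<Sum>n\<in>?S. sm (Poly_Mapping.lookup q n) ((\<phi> ^^ n) u))"
    by (simp add: lookup_add sm_add_left sum.distrib)
  finally show ?thesis
    using pact_eq_sum_superset[of ?S p u] pact_eq_sum_superset[of ?S q u] by simp
qed

lemma pact_sum: "pact sm \<phi> (sum g I) u = (\<Sum>i\<in>I. pact sm \<phi> (g i) u)"
  by (induction I rule: infinite_finite_induct) (auto simp: pact_zero pact_add)

lemma pact_single: "pact sm \<phi> (Poly_Mapping.single n a) u = sm a ((\<phi> ^^ n) u)"
  by (simp add: pact_def sm_zero_left)

lemma pact_add_right: "pact sm \<phi> p (u + v) = pact sm \<phi> p u + pact sm \<phi> p v"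
  unfolding pact_def using rhom_funpow by (simp add: rhom_def sm_add_right sum.distrib)

lemma pact_zero_right: "pact sm \<phi> p 0 = 0"
  unfolding pact_def using rhom_funpow by (simp add: rhom_zero sm_zero_right)

lemma pact_sum_right: "pact sm \<phi> p (sum g I) = (\<Sum>i\<in>I. pact sm \<phi> p (g i))"
  by (induction I rule: infinite_finite_induct) (auto simp: pact_zero_right pact_add_right)

lemma pact_single_mult:
  "pact sm \<phi> (Poly_Mapping.single n a * q) u = sm a ((\<phi> ^^ n) (pact sm \<phi> q u))"
proof -
  have "Poly_Mapping.single n a * q =
      (\<Sum>m\<in>Poly_Mapping.keys q. Poly_Mapping.single (n + m) (a * Poly_Mapping.lookup q m))"
    by (subst poly_mapping_eq_sum_single[of q]) (simp add: sum_distrib_left mult_single)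
  then show ?thesis
    unfolding pact_def[of sm \<phi> q] using rhom_funpow[of n]
    by (simp add: pact_sum pact_single rhom_sum sm_sum_right sm_mult funpow_add rhom_def)
qed

lemma pact_mult: "pact sm \<phi> (p * q) u = pact sm \<phi> p (pact sm \<phi> q u)"
proof -
  have "p * q = (\<Sum>n\<in>Poly_Mapping.keys p. Poly_Mapping.single n (Poly_Mapping.lookup p n) * q)"
    by (subst poly_mapping_eq_sum_single[of p]) (simp add: sum_distrib_right)
  then show ?thesis
    by (simp add: pact_sum pact_single_mult pact_def[of sm \<phi> p])
qed

lemma PhiMap_add:
  "PhiMap sm \<phi> \<Gamma> x (\<lambda>\<gamma>. f \<gamma> + g \<gamma>) = PhiMap sm \<phi> \<Gamma> x f + PhiMap sm \<phi> \<Gamma> x g"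
  by (simp add: PhiMap_def pact_add sum.distrib)

lemma PhiMap_diff:
  "PhiMap sm \<phi> \<Gamma> x (\<lambda>\<gamma>. f \<gamma> - g \<gamma>) = PhiMap sm \<phi> \<Gamma> x f - PhiMap sm \<phi> \<Gamma> x g"
  using PhiMap_add[of \<Gamma> x "\<lambda>\<gamma>. f \<gamma> - g \<gamma>" g] by (simp add: eq_diff_eq)

lemma PhiMap_uminus: "PhiMap sm \<phi> \<Gamma> x (\<lambda>\<gamma>. - f \<gamma>) = - PhiMap sm \<phi> \<Gamma> x f"
  using PhiMap_diff[of \<Gamma> x "\<lambda>_. 0" f] by (simp add: PhiMap_def pact_zero)

lemma PhiMap_mult: "PhiMap sm \<phi> \<Gamma> x (\<lambda>\<gamma>. c * f \<gamma>) = pact sm \<phi> c (PhiMap sm \<phi> \<Gamma> x f)"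
  by (simp add: PhiMap_def pact_mult pact_sum_right)

lemma jordan_base_chain:
  assumes "jordan_base sm \<phi> \<Gamma> k x" and "\<gamma> \<in> \<Gamma>" and "1 \<le> i" and "i \<le> k \<gamma>"
  shows "x \<gamma> i = (\<phi> ^^ (i - 1)) (x \<gamma> 1)"
  using assms(3,4)
proof (induction i rule: nat_induct_at_least)
  case (Suc n)
  have "x \<gamma> (Suc n) = \<phi> (x \<gamma> n)"
    using assms(1,2) Suc.hyps(1) Suc.prems unfolding jordan_base_def by auto
  with Suc show ?case
    by (cases n) simp_all
qed simp

lemma PhiMap_surj:
  assumes jordan: "jordan_base sm \<phi> \<Gamma> k x" and "finite \<Gamma>"
  shows "\<exists>f\<in>rvecs \<Gamma>. PhiMap sm \<phi> \<Gamma> x f = u"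
proof -
  obtain c where c_cyc: "\<forall>(\<gamma>, i)\<in>jidx \<Gamma> k. c (\<gamma>, i) \<in> cyc sm (x \<gamma> i)"
    and u_eq: "u = (\<Sum>p\<in>jidx \<Gamma> k. c p)"
    using jordan ex1_implies_ex unfolding jordan_base_def by blast
  then have "\<forall>p\<in>jidx \<Gamma> k. \<exists>a. c p = sm a (x (fst p) (snd p))"
    by (auto simp: cyc_def)
  from bchoice[OF this] obtain a where a: "\<forall>p\<in>jidx \<Gamma> k. c p = sm (a p) (x (fst p) (snd p))"
    by blast
  define f where "f \<gamma> = (if \<gamma> \<in> \<Gamma>
      then \<Sum>i\<in>{1..k \<gamma>}. Poly_Mapping.single (i - 1) (a (\<gamma>, i)) else 0)" for \<gamma>
  have f: "f \<in> rvecs \<Gamma>"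
    by (simp add: rvecs_def f_def)
  have "PhiMap sm \<phi> \<Gamma> x f = (\<Sum>\<gamma>\<in>\<Gamma>. \<Sum>i\<in>{1..k \<gamma>}. sm (a (\<gamma>, i)) ((\<phi> ^^ (i - 1)) (x \<gamma> 1)))"
    unfolding PhiMap_def f_def by (simp add: pact_sum pact_single)
  also have "\<dots> = (\<Sum>\<gamma>\<in>\<Gamma>. \<Sum>i\<in>{1..k \<gamma>}. c (\<gamma>, i))"
  proof (intro sum.cong refl)
    fix \<gamma> i assume \<gamma>: "\<gamma> \<in> \<Gamma>" and i: "i \<in> {1..k \<gamma>}"
    have "x \<gamma> i = (\<phi> ^^ (i - 1)) (x \<gamma> 1)"
      using i by (intro jordan_base_chain[OF jordan \<gamma>]) simp_all
    moreover have "c (\<gamma>, i) = sm (a (\<gamma>, i)) (x \<gamma> i)"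
      using a \<gamma> i by (simp add: jidx_def)
    ultimately show "sm (a (\<gamma>, i)) ((\<phi> ^^ (i - 1)) (x \<gamma> 1)) = c (\<gamma>, i)"
      by simp
  qed
  also have "\<dots> = u"
    unfolding u_eq jidx_def using \<open>finite \<Gamma>\<close> by (simp add: sum.Sigma)
  finally show ?thesis
    using f by blast
qed

lemma MPhiI:
  assumes "P \<in> rmats \<Gamma>"
    and "\<And>f. f \<in> rvecs \<Gamma> \<Longrightarrow> PhiMap sm \<phi> \<Gamma> x f = 0 \<Longrightarrow> PhiMap sm \<phi> \<Gamma> x (vmult \<Gamma> f P) = 0"
  shows "P \<in> MPhi sm \<phi> \<Gamma> x"
  using assms by (simp add: MPhi_def kerPhi_def vmult_in_rvecs)

lemma MPhiD:
  assumes "P \<in> MPhi sm \<phi> \<Gamma> x" and "f \<in> rvecs \<Gamma>" and "PhiMap sm \<phi> \<Gamma> x f = 0"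
  shows "PhiMap sm \<phi> \<Gamma> x (vmult \<Gamma> f P) = 0"
  using assms by (simp add: MPhi_def kerPhi_def)

lemma MPhi_rmats: "P \<in> MPhi sm \<phi> \<Gamma> x \<Longrightarrow> P \<in> rmats \<Gamma>"
  by (simp add: MPhi_def)

lemma z_subalgebra_MPhi:
  assumes "finite \<Gamma>"
  shows "z_subalgebra \<Gamma> (MPhi sm \<phi> \<Gamma> x)"
  unfolding z_subalgebra_def
proof (intro conjI ballI subsetI)
  show "mone \<Gamma> \<in> MPhi sm \<phi> \<Gamma> x"
  proof (rule MPhiI)
    show "mone \<Gamma> \<in> rmats \<Gamma>"
      by (simp add: mone_def rmats_def)
  qed (simp add: vmult_mone[OF assms])
next
  fix P Q assume P: "P \<in> MPhi sm \<phi> \<Gamma> x" and Q: "Q \<in> MPhi sm \<phi> \<Gamma> x"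
  then have rmats: "P \<in> rmats \<Gamma>" "Q \<in> rmats \<Gamma>"
    by (simp_all add: MPhi_rmats)
  have "madd P Q \<in> rmats \<Gamma>"
    using rmats by (simp add: rmats_def madd_def)
  then show "madd P Q \<in> MPhi sm \<phi> \<Gamma> x"
    by (rule MPhiI) (simp add: vmult_madd PhiMap_add MPhiD[OF P] MPhiD[OF Q])
  show "mmult \<Gamma> P Q \<in> MPhi sm \<phi> \<Gamma> x"
    using mmult_in_rmats[OF rmats]
    by (rule MPhiI) (simp add: vmult_in_rvecs[OF rmats(1)] MPhiD[OF P] MPhiD[OF Q] flip: vmult_mmult)
next
  fix P assume P: "P \<in> MPhi sm \<phi> \<Gamma> x"
  then show "P \<in> rmats \<Gamma>"
    by (rule MPhi_rmats)
  have "mneg P \<in> rmats \<Gamma>"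
    using MPhi_rmats[OF P] by (simp add: rmats_def mneg_def)
  then show "mneg P \<in> MPhi sm \<phi> \<Gamma> x"
    by (rule MPhiI) (simp add: vmult_mneg PhiMap_uminus MPhiD[OF P])
  fix z :: 'r assume z: "z \<in> center"
  have "mscal z P \<in> rmats \<Gamma>"
    using MPhi_rmats[OF P] by (simp add: rmats_def mscal_def)
  then show "mscal z P \<in> MPhi sm \<phi> \<Gamma> x"
  proof (rule MPhiI)
    fix f assume "f \<in> rvecs \<Gamma>" and "PhiMap sm \<phi> \<Gamma> x f = 0"
    moreover have "PhiMap sm \<phi> \<Gamma> x (vmult \<Gamma> f (mscal z P))
        = pact sm \<phi> (Poly_Mapping.single 0 z) (PhiMap sm \<phi> \<Gamma> x (vmult \<Gamma> f P))"
      by (simp only: vmult_mscal[OF z] PhiMap_mult)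
    ultimately show "PhiMap sm \<phi> \<Gamma> x (vmult \<Gamma> f (mscal z P)) = 0"
      by (simp add: MPhiD[OF P] pact_zero_right)
  qed
qed

lemma PhiMap_vmult_cong:
  assumes "P \<in> MPhi sm \<phi> \<Gamma> x" and "f \<in> rvecs \<Gamma>" and "g \<in> rvecs \<Gamma>"
    and "PhiMap sm \<phi> \<Gamma> x f = PhiMap sm \<phi> \<Gamma> x g"
  shows "PhiMap sm \<phi> \<Gamma> x (vmult \<Gamma> f P) = PhiMap sm \<phi> \<Gamma> x (vmult \<Gamma> g P)"
proof -
  have "(\<lambda>\<gamma>. f \<gamma> - g \<gamma>) \<in> rvecs \<Gamma>"
    using assms(2,3) by (simp add: rvecs_def)
  from MPhiD[OF assms(1) this] show ?thesis
    using assms(4) by (simp add: PhiMap_diff vmult_diff_left)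
qed

end

context
  fixes sm :: "'r::ring_1 \<Rightarrow> 'm::ab_group_add \<Rightarrow> 'm" and \<phi> :: "'m \<Rightarrow> 'm"
    and \<Gamma> :: "'g set" and x :: "'g \<Rightarrow> nat \<Rightarrow> 'm"
  assumes lmodule: "lmodule sm" and rhom_\<phi>: "rhom sm \<phi>"
    and PhiMap_onto: "\<And>u. \<exists>f\<in>rvecs \<Gamma>. PhiMap sm \<phi> \<Gamma> x f = u"
begin

lemma eq_if_eq_on_PhiMap:
  assumes "\<And>f. f \<in> rvecs \<Gamma> \<Longrightarrow> \<psi> (PhiMap sm \<phi> \<Gamma> x f) = \<psi>' (PhiMap sm \<phi> \<Gamma> x f)"
  shows "\<psi> = \<psi>'"
proof
  fix u
  from PhiMap_onto obtain f where "f \<in> rvecs \<Gamma>" "PhiMap sm \<phi> \<Gamma> x f = u"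
    by blast
  with assms show "\<psi> u = \<psi>' u"
    by blast
qed

lemma psiP_unique:
  assumes "P \<in> MPhi sm \<phi> \<Gamma> x"
  shows "\<exists>!\<psi>. \<forall>f\<in>rvecs \<Gamma>. \<psi> (PhiMap sm \<phi> \<Gamma> x f) = PhiMap sm \<phi> \<Gamma> x (vmult \<Gamma> f P)"
proof (rule ex_ex1I)
  define rep where "rep u = (SOME f. f \<in> rvecs \<Gamma> \<and> PhiMap sm \<phi> \<Gamma> x f = u)" for u
  have "PhiMap sm \<phi> \<Gamma> x (vmult \<Gamma> (rep (PhiMap sm \<phi> \<Gamma> x f)) P) = PhiMap sm \<phi> \<Gamma> x (vmult \<Gamma> f P)"
    if f: "f \<in> rvecs \<Gamma>" for f
  proof -
    have "rep (PhiMap sm \<phi> \<Gamma> x f) \<in> rvecs \<Gamma> \<and>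
        PhiMap sm \<phi> \<Gamma> x (rep (PhiMap sm \<phi> \<Gamma> x f)) = PhiMap sm \<phi> \<Gamma> x f"
      unfolding rep_def by (rule someI[of _ f]) (simp add: f)
    then show ?thesis
      using PhiMap_vmult_cong[OF lmodule rhom_\<phi> assms _ f] by blast
  qed
  then show "\<exists>\<psi>. \<forall>f\<in>rvecs \<Gamma>. \<psi> (PhiMap sm \<phi> \<Gamma> x f) = PhiMap sm \<phi> \<Gamma> x (vmult \<Gamma> f P)"
    by (intro exI[of _ "\<lambda>u. PhiMap sm \<phi> \<Gamma> x (vmult \<Gamma> (rep u) P)"]) simp
next
  fix \<psi> \<psi>'
  assume \<psi>: "\<forall>f\<in>rvecs \<Gamma>. \<psi> (PhiMap sm \<phi> \<Gamma> x f) = PhiMap sm \<phi> \<Gamma> x (vmult \<Gamma> f P)"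
    and \<psi>': "\<forall>f\<in>rvecs \<Gamma>. \<psi>' (PhiMap sm \<phi> \<Gamma> x f) = PhiMap sm \<phi> \<Gamma> x (vmult \<Gamma> f P)"
  show "\<psi> = \<psi>'"
    by (rule eq_if_eq_on_PhiMap) (simp add: \<psi> \<psi>')
qed

lemma psiP_PhiMap:
  assumes "P \<in> MPhi sm \<phi> \<Gamma> x" and "f \<in> rvecs \<Gamma>"
  shows "psiP sm \<phi> \<Gamma> x P (PhiMap sm \<phi> \<Gamma> x f) = PhiMap sm \<phi> \<Gamma> x (vmult \<Gamma> f P)"
  using theI'[OF psiP_unique[OF assms(1)]] assms(2) unfolding psiP_def by blast

lemma psiP_add:
  assumes "P \<in> MPhi sm \<phi> \<Gamma> x"
  shows "psiP sm \<phi> \<Gamma> x P (u + v) = psiP sm \<phi> \<Gamma> x P u + psiP sm \<phi> \<Gamma> x P v"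
proof -
  obtain f g where f: "f \<in> rvecs \<Gamma>" and g: "g \<in> rvecs \<Gamma>"
    and u: "u = PhiMap sm \<phi> \<Gamma> x f" and v: "v = PhiMap sm \<phi> \<Gamma> x g"
    using PhiMap_onto by metis
  have "(\<lambda>\<gamma>. f \<gamma> + g \<gamma>) \<in> rvecs \<Gamma>"
    using f g by (simp add: rvecs_def)
  with f g show ?thesis
    unfolding u v
    by (simp add: psiP_PhiMap[OF assms] vmult_add_left flip: PhiMap_add[OF lmodule rhom_\<phi>])
qed

lemma psiP_pact:
  assumes "P \<in> MPhi sm \<phi> \<Gamma> x"
  shows "psiP sm \<phi> \<Gamma> x P (pact sm \<phi> c u) = pact sm \<phi> c (psiP sm \<phi> \<Gamma> x P u)"
proof -
  obtain f where f: "f \<in> rvecs \<Gamma>" and u: "u = PhiMap sm \<phi> \<Gamma> x f"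
    using PhiMap_onto by metis
  have "(\<lambda>\<gamma>. c * f \<gamma>) \<in> rvecs \<Gamma>"
    using f by (simp add: rvecs_def)
  with f show ?thesis
    unfolding u
    by (simp add: psiP_PhiMap[OF assms] vmult_mult_left flip: PhiMap_mult[OF lmodule rhom_\<phi>])
qed

lemma psiP_in_centralizer:
  assumes "P \<in> MPhi sm \<phi> \<Gamma> x"
  shows "psiP sm \<phi> \<Gamma> x P \<in> centralizer sm \<phi>"
proof -
  have "sm a u = pact sm \<phi> (Poly_Mapping.single 0 a) u" for a u
    by (simp add: pact_single[OF lmodule rhom_\<phi>])
  moreover have "\<phi> u = pact sm \<phi> (Poly_Mapping.single 1 1) u" for u
    by (simp add: pact_single[OF lmodule rhom_\<phi>] sm_one[OF lmodule rhom_\<phi>])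
  ultimately show ?thesis
    unfolding centralizer_def rhom_def
    by (simp add: psiP_add[OF assms] psiP_pact[OF assms] fun_eq_iff)
qed

lemma psiP_mone:
  assumes "finite \<Gamma>"
  shows "psiP sm \<phi> \<Gamma> x (mone \<Gamma>) = id"
proof (rule eq_if_eq_on_PhiMap)
  have "mone \<Gamma> \<in> MPhi sm \<phi> \<Gamma> x"
    using z_subalgebra_MPhi[OF lmodule rhom_\<phi> assms] by (simp add: z_subalgebra_def)
  then show "psiP sm \<phi> \<Gamma> x (mone \<Gamma>) (PhiMap sm \<phi> \<Gamma> x f) = id (PhiMap sm \<phi> \<Gamma> x f)"
    if "f \<in> rvecs \<Gamma>" for f
    using that by (simp add: psiP_PhiMap vmult_mone[OF assms])
qed

lemma psiP_madd:
  assumes "madd P Q \<in> MPhi sm \<phi> \<Gamma> x" and "P \<in> MPhi sm \<phi> \<Gamma> x" and "Q \<in> MPhi sm \<phi> \<Gamma> x"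
  shows "psiP sm \<phi> \<Gamma> x (madd P Q) = (\<lambda>u. psiP sm \<phi> \<Gamma> x P u + psiP sm \<phi> \<Gamma> x Q u)"
  by (rule eq_if_eq_on_PhiMap)
    (use assms in \<open>simp add: psiP_PhiMap vmult_madd PhiMap_add[OF lmodule rhom_\<phi>]\<close>)

lemma psiP_mmult:
  assumes "mmult \<Gamma> P Q \<in> MPhi sm \<phi> \<Gamma> x" and "P \<in> MPhi sm \<phi> \<Gamma> x" and "Q \<in> MPhi sm \<phi> \<Gamma> x"
  shows "psiP sm \<phi> \<Gamma> x (mmult \<Gamma> P Q) = psiP sm \<phi> \<Gamma> x Q \<circ> psiP sm \<phi> \<Gamma> x P"
  by (rule eq_if_eq_on_PhiMap)
    (use assms in \<open>simp add: psiP_PhiMap vmult_in_rvecs MPhi_rmats[OF lmodule rhom_\<phi>] flip: vmult_mmult\<close>)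

lemma psiP_mscal:
  assumes "z \<in> center" and "mscal z P \<in> MPhi sm \<phi> \<Gamma> x" and "P \<in> MPhi sm \<phi> \<Gamma> x"
  shows "psiP sm \<phi> \<Gamma> x (mscal z P) = (\<lambda>u. sm z (psiP sm \<phi> \<Gamma> x P u))"
  by (rule eq_if_eq_on_PhiMap)
    (use assms in \<open>simp add: psiP_PhiMap vmult_mscal PhiMap_mult[OF lmodule rhom_\<phi>]
      pact_single[OF lmodule rhom_\<phi>]\<close>)

end

theorem lemma4p1:
  fixes sm :: "'r::ring_1 \<Rightarrow> 'm::ab_group_add \<Rightarrow> 'm"
    and \<phi> :: "'m \<Rightarrow> 'm"
    and \<Gamma> :: "'g set"
    and k :: "'g \<Rightarrow> nat"
    and x :: "'g \<Rightarrow> nat \<Rightarrow> 'm"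
  assumes "lmodule sm"
    and "finitely_generated sm"
    and "semisimple sm"
    and "rhom sm \<phi>"
    and "nilpotent_map \<phi>"
    and "jordan_base sm \<phi> \<Gamma> k x"
    and "finite \<Gamma>"
  shows "z_subalgebra \<Gamma> (MPhi sm \<phi> \<Gamma> x) \<and>
    (\<forall>P \<in> MPhi sm \<phi> \<Gamma> x.
       (\<exists>!\<psi>. \<forall>f \<in> rvecs \<Gamma>. \<psi> (PhiMap sm \<phi> \<Gamma> x f) = PhiMap sm \<phi> \<Gamma> x (vmult \<Gamma> f P)) \<and>
       psiP sm \<phi> \<Gamma> x P \<in> centralizer sm \<phi>) \<and>
    psiP sm \<phi> \<Gamma> x (mone \<Gamma>) = id \<and>
    (\<forall>P \<in> MPhi sm \<phi> \<Gamma> x. \<forall>Q \<in> MPhi sm \<phi> \<Gamma> x.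
       psiP sm \<phi> \<Gamma> x (madd P Q) = (\<lambda>u. psiP sm \<phi> \<Gamma> x P u + psiP sm \<phi> \<Gamma> x Q u) \<and>
       psiP sm \<phi> \<Gamma> x (mmult \<Gamma> P Q) = psiP sm \<phi> \<Gamma> x Q \<circ> psiP sm \<phi> \<Gamma> x P) \<and>
    (\<forall>z \<in> center. \<forall>P \<in> MPhi sm \<phi> \<Gamma> x.
       psiP sm \<phi> \<Gamma> x (mscal z P) = (\<lambda>u. sm z (psiP sm \<phi> \<Gamma> x P u)))"
proof -
  note lmodule = assms(1) and rhom_\<phi> = assms(4)
  have subalgebra: "z_subalgebra \<Gamma> (MPhi sm \<phi> \<Gamma> x)"
    using z_subalgebra_MPhi[OF lmodule rhom_\<phi> assms(7)] .
  have onto: "\<And>u. \<exists>f\<in>rvecs \<Gamma>. PhiMap sm \<phi> \<Gamma> x f = u"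
    using PhiMap_surj[OF lmodule rhom_\<phi> assms(6,7)] .
  note psiP_facts = psiP_unique psiP_in_centralizer psiP_mone psiP_madd psiP_mmult psiP_mscal
  show ?thesis
    using subalgebra psiP_facts[OF lmodule rhom_\<phi> onto] assms(7)
    by (simp add: z_subalgebra_def)
qed

end
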